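(* Let $P$ be an order having at least one maximum chain. If $P$ has a relatively maximum full trunk $R$, then $R$ is the union of all maximum chains of $P$. Moreover, $P$ has a relatively maximum full trunk if and only if the union of all maximum chains of $P$ is a trunk.
   Context: Orders are partial orders; $x\sim y$ means $x\ne y$ and $x,y$ incomparable. A trunk of $P$ is a subset $T$ (with the induced order) such that for all pairwise distinct $x,y,z\in T$, $x\sim y$ and $y\sim z$ imply $x\sim z$. A chain of $P$ is maximum if it is maximal under inclusion and no chain of $P$ has greater cardinality. A full trunk is a trunk containing at least one maximum chain of $P$. A relatively maximum full trunk is a full trunk that is the unique full trunk of $P$ maximal under inclusion. *)

theory Defs
  imports Main
begin

text \<open>The order P is the type 'a with its partial order (class order).\<close>

definition incomp :: "'a::order \<Rightarrow> 'a \<Rightarrow> bool" where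
  "incomp x y \<longleftrightarrow> x \<noteq> y \<and> \<not> x \<le> y \<and> \<not> y \<le> x"

definition trunk :: "'a::order set \<Rightarrow> bool" where
  "trunk T \<longleftrightarrow> (\<forall>x\<in>T. \<forall>y\<in>T. \<forall>z\<in>T. x \<noteq> y \<and> y \<noteq> z \<and> x \<noteq> z \<longrightarrow>
      incomp x y \<and> incomp y z \<longrightarrow> incomp x z)"

definition maximal_chain :: "'a::order set \<Rightarrow> bool" where
  "maximal_chain C \<longleftrightarrow> Complete_Partial_Order.chain (\<le>) C \<and>
      (\<forall>D. Complete_Partial_Order.chain (\<le>) D \<and> C \<subseteq> D \<longrightarrow> D = C)"

definition maximum_chain :: "'a::order set \<Rightarrow> bool" where
  "maximum_chain C \<longleftrightarrow> maximal_chain C \<and>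
      (\<nexists>D::'a set. Complete_Partial_Order.chain (\<le>) D \<and> (card_of C, card_of D) \<in> ordLess)"

definition full_trunk :: "'a::order set \<Rightarrow> bool" where
  "full_trunk T \<longleftrightarrow> trunk T \<and> (\<exists>C. maximum_chain C \<and> C \<subseteq> T)"

definition maximal_full_trunk :: "'a::order set \<Rightarrow> bool" where
  "maximal_full_trunk T \<longleftrightarrow> full_trunk T \<and> (\<forall>S. full_trunk S \<and> T \<subseteq> S \<longrightarrow> S = T)"

definition rel_max_full_trunk :: "'a::order set \<Rightarrow> bool" where
  "rel_max_full_trunk R \<longleftrightarrow> maximal_full_trunk R \<and> (\<forall>S. maximal_full_trunk S \<longrightarrow> S = R)"

end

theory Submission
  imports Defs
begin

text \<open>
  Every element x of a full trunk S lies in a maximum chain: if S contains the maximum chain C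
  and x \<notin> C, then x is incomparable to some c \<in> C by maximality of C, and to no other element
  of C because incomparability is transitive in S.  Swapping c for x gives a chain of the same
  cardinality as C, and any maximal chain extending it is maximum.  So every full trunk lies in
  the union U of all maximum chains.  Conversely every maximum chain lies in a maximal trunk
  (Zorn), which is a maximal full trunk.  If R is the only maximal full trunk, both facts give
  R = U; and if U is a trunk, it is a full trunk containing all others, hence the only maximal one.
\<close>

lemma subset_Zorn_extend:
  assumes "P C"
    and "\<And>\<C>. \<C> \<noteq> {} \<Longrightarrow> subset.chain {D. P D} \<C> \<Longrightarrow> P (\<Union>\<C>)"
  shows "\<exists>M. P M \<and> C \<subseteq> M \<and> (\<forall>S. P S \<and> M \<subseteq> S \<longrightarrow> S = M)"
proof -
  let ?\<A> = "{D. P D \<and> C \<subseteq> D}"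
  have "\<Union>\<C> \<in> ?\<A>" if "\<C> \<noteq> {}" "subset.chain ?\<A> \<C>" for \<C>
  proof -
    have "subset.chain {D. P D} \<C>"
      using that(2) by (auto simp: subset_chain_def)
    then have "P (\<Union>\<C>)"
      using assms(2) that(1) by blast
    moreover have "C \<subseteq> \<Union>\<C>"
      using that unfolding subset_chain_def by blast
    ultimately show ?thesis
      by blast
  qed
  then obtain M where "M \<in> ?\<A>" "\<forall>X\<in>?\<A>. M \<subseteq> X \<longrightarrow> X = M"
    using subset_Zorn_nonempty[of ?\<A>] assms(1) by blast
  then show ?thesis
    by blast
qed

lemma chain_Union_subset_chain:
  assumes "\<C> \<noteq> {}" "subset.chain {D. Complete_Partial_Order.chain ord D} \<C>"
  shows "Complete_Partial_Order.chain ord (\<Union>\<C>)"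
proof (rule chainI)
  fix x y assume "x \<in> \<Union>\<C>" "y \<in> \<Union>\<C>"
  then obtain B where "B \<in> \<C>" "{x, y} \<subseteq> B"
    using finite_subset_Union_chain[of "{x, y}" \<C>] assms by blast
  then show "ord x y \<or> ord y x"
    using assms(2) by (auto simp: subset_chain_def dest: chainD)
qed

lemma trunkD:
  "trunk T \<Longrightarrow> x \<in> T \<Longrightarrow> y \<in> T \<Longrightarrow> z \<in> T \<Longrightarrow> x \<noteq> y \<Longrightarrow> y \<noteq> z \<Longrightarrow> x \<noteq> z
    \<Longrightarrow> incomp x y \<Longrightarrow> incomp y z \<Longrightarrow> incomp x z"
  unfolding trunk_def by blast

lemma trunk_Union_subset_chain:
  assumes "\<C> \<noteq> {}" "subset.chain {D. trunk D} \<C>"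
  shows "trunk (\<Union>\<C>)"
  unfolding trunk_def
proof (intro ballI)
  fix x y z assume "x \<in> \<Union>\<C>" "y \<in> \<Union>\<C>" "z \<in> \<Union>\<C>"
  then obtain B where "B \<in> \<C>" "{x, y, z} \<subseteq> B"
    using finite_subset_Union_chain[of "{x, y, z}" \<C>] assms by blast
  moreover have "trunk B"
    using \<open>B \<in> \<C>\<close> assms(2) by (auto simp: subset_chain_def)
  ultimately show "x \<noteq> y \<and> y \<noteq> z \<and> x \<noteq> z \<longrightarrow> incomp x y \<and> incomp y z \<longrightarrow> incomp x z"
    using trunkD by blast
qed

lemma chain_imp_trunk: "Complete_Partial_Order.chain (\<le>) C \<Longrightarrow> trunk C"
  unfolding trunk_def incomp_def chain_def by blast

lemma maximum_chain_imp_chain: "maximum_chain C \<Longrightarrow> Complete_Partial_Order.chain (\<le>) C"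
  unfolding maximum_chain_def maximal_chain_def by blast

lemma maximal_chain_extends:
  fixes C :: "'a::order set"
  assumes "Complete_Partial_Order.chain (\<le>) C"
  shows "\<exists>M. maximal_chain M \<and> C \<subseteq> M"
  using subset_Zorn_extend[of "Complete_Partial_Order.chain (\<le>)", OF assms chain_Union_subset_chain]
  unfolding maximal_chain_def by blast

lemma maximum_chain_subset_maximal_full_trunk:
  fixes C :: "'a::order set"
  assumes "maximum_chain C"
  shows "\<exists>T. maximal_full_trunk T \<and> C \<subseteq> T"
proof -
  obtain T where T: "trunk T" "C \<subseteq> T" "\<forall>S. trunk S \<and> T \<subseteq> S \<longrightarrow> S = T"
    using subset_Zorn_extend[of trunk, OF _ trunk_Union_subset_chain]
      chain_imp_trunk[OF maximum_chain_imp_chain[OF assms]] by blast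
  then have "maximal_full_trunk T"
    using assms unfolding maximal_full_trunk_def full_trunk_def by blast
  with T show ?thesis
    by blast
qed

lemma maximal_chain_dominating_maximum_chain:
  fixes C M :: "'a::order set"
  assumes "maximum_chain C" "maximal_chain M" "(card_of C, card_of M) \<in> ordLeq"
  shows "maximum_chain M"
  unfolding maximum_chain_def
proof (intro conjI assms(2) notI)
  assume "\<exists>D::'a set. Complete_Partial_Order.chain (\<le>) D \<and> (card_of M, card_of D) \<in> ordLess"
  then obtain D :: "'a set" where "Complete_Partial_Order.chain (\<le>) D" "(card_of C, card_of D) \<in> ordLess"
    using ordLeq_ordLess_trans[OF assms(3)] by blast
  then show False
    using assms(1) unfolding maximum_chain_def by blast
qed

lemma trunk_maximal_chain_swap:
  fixes x :: "'a::order"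
  assumes S: "trunk S" and C: "maximal_chain C" "C \<subseteq> S" and x: "x \<in> S" "x \<notin> C"
  obtains c where "c \<in> C" "Complete_Partial_Order.chain (\<le>) (insert x (C - {c}))"
proof -
  have C_chain: "Complete_Partial_Order.chain (\<le>) C"
    using C(1) unfolding maximal_chain_def by blast
  obtain c where c: "c \<in> C" "incomp x c"
  proof (rule ccontr)
    assume "\<not> thesis"
    then have "Complete_Partial_Order.chain (\<le>) (insert x C)"
      using C_chain that unfolding chain_def incomp_def by (metis insert_iff order_refl)
    then show False
      using C(1) x(2) unfolding maximal_chain_def by blast
  qed
  have comparable: "x \<le> d \<or> d \<le> x" if "d \<in> C" "d \<noteq> c" for d
  proof (rule ccontr)
    assume "\<not> (x \<le> d \<or> d \<le> x)"
    then have "incomp d x"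
      unfolding incomp_def by auto
    moreover have "d \<noteq> x" "x \<noteq> c"
      using that(1) c(1) x(2) by auto
    ultimately have "incomp d c"
      using trunkD[OF S] C(2) x(1) c that by blast
    then show False
      using C_chain c(1) that(1) unfolding chain_def incomp_def by blast
  qed
  have "Complete_Partial_Order.chain (\<le>) (insert x (C - {c}))"
    using C_chain comparable unfolding chain_def by blast
  with c(1) show thesis
    by (rule that)
qed

lemma full_trunk_subset_Union_maximum_chains:
  fixes S :: "'a::order set"
  assumes "full_trunk S"
  shows "S \<subseteq> \<Union>{C. maximum_chain C}"
proof
  fix x assume x: "x \<in> S"
  obtain C where S: "trunk S" and C: "maximum_chain C" "C \<subseteq> S"
    using assms unfolding full_trunk_def by blast
  show "x \<in> \<Union>{C. maximum_chain C}"
  proof (cases "x \<in> C")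
    case True
    with C show ?thesis by blast
  next
    case False
    obtain c where c: "c \<in> C" "Complete_Partial_Order.chain (\<le>) (insert x (C - {c}))"
      using trunk_maximal_chain_swap[OF S _ C(2) x False] C(1)
      unfolding maximum_chain_def by blast
    obtain M where M: "maximal_chain M" "insert x (C - {c}) \<subseteq> M"
      using maximal_chain_extends[OF c(2)] by blast
    have "bij_betw (id(c := x)) C (insert x (C - {c}))"
      using False c(1) unfolding bij_betw_def inj_on_def by auto
    then have "(card_of C, card_of (insert x (C - {c}))) \<in> ordIso"
      using card_of_ordIso by blast
    then have "(card_of C, card_of M) \<in> ordLeq"
      using ordIso_ordLeq_trans card_of_mono1[OF M(2)] by blast
    then have "maximum_chain M"
      using maximal_chain_dominating_maximum_chain[OF C(1) M(1)] by blast
    with M(2) show ?thesis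
      by blast
  qed
qed

lemma rel_max_full_trunk_eq_Union_maximum_chains:
  fixes R :: "'a::order set"
  assumes "rel_max_full_trunk R"
  shows "R = \<Union>{C. maximum_chain C}"
proof
  have R: "full_trunk R" "\<And>S. maximal_full_trunk S \<Longrightarrow> S = R"
    using assms unfolding rel_max_full_trunk_def maximal_full_trunk_def by blast+
  show "R \<subseteq> \<Union>{C. maximum_chain C}"
    using full_trunk_subset_Union_maximum_chains[OF R(1)] .
  show "\<Union>{C. maximum_chain C} \<subseteq> R"
  proof
    fix x :: 'a assume "x \<in> \<Union>{C. maximum_chain C}"
    then obtain C where C: "maximum_chain C" "x \<in> C"
      by blast
    obtain T where "maximal_full_trunk T" "C \<subseteq> T"
      using maximum_chain_subset_maximal_full_trunk[OF C(1)] by blast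
    with R(2) C(2) show "x \<in> R"
      by blast
  qed
qed

lemma rel_max_full_trunk_Union_maximum_chains:
  fixes C\<^sub>0 :: "'a::order set"
  assumes "trunk (\<Union>{C::'a set. maximum_chain C})" "maximum_chain C\<^sub>0"
  shows "rel_max_full_trunk (\<Union>{C::'a set. maximum_chain C})"
proof -
  let ?U = "\<Union>{C::'a set. maximum_chain C}"
  have "full_trunk ?U"
    using assms unfolding full_trunk_def by blast
  have "maximal_full_trunk ?U"
    unfolding maximal_full_trunk_def
  proof (intro conjI allI impI \<open>full_trunk ?U\<close>)
    fix S assume "full_trunk S \<and> ?U \<subseteq> S"
    then show "S = ?U"
      using full_trunk_subset_Union_maximum_chains[of S] by blast
  qed
  moreover have "S = ?U" if "maximal_full_trunk S" for S
  proof -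
    have "full_trunk S" "\<And>T. full_trunk T \<Longrightarrow> S \<subseteq> T \<Longrightarrow> T = S"
      using that unfolding maximal_full_trunk_def by blast+
    then show "S = ?U"
      using \<open>full_trunk ?U\<close> full_trunk_subset_Union_maximum_chains[of S] by blast
  qed
  ultimately show ?thesis
    unfolding rel_max_full_trunk_def by blast
qed

theorem corollary5p7:
  fixes dummy :: "'a::order"
  assumes "\<exists>C::'a set. maximum_chain C"
  shows "(\<forall>R::'a set. rel_max_full_trunk R \<longrightarrow> R = \<Union>{C. maximum_chain C})
     \<and> ((\<exists>R::'a set. rel_max_full_trunk R) \<longleftrightarrow> trunk (\<Union>{C::'a set. maximum_chain C}))"
proof (intro conjI allI impI iffI)
  show "R = \<Union>{C. maximum_chain C}" if "rel_max_full_trunk R" for R :: "'a set"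
    using rel_max_full_trunk_eq_Union_maximum_chains[OF that] .
  show "trunk (\<Union>{C::'a set. maximum_chain C})" if R_ex: "\<exists>R::'a set. rel_max_full_trunk R"
  proof -
    obtain R :: "'a set" where R: "rel_max_full_trunk R"
      using R_ex by blast
    then have "trunk R"
      unfolding rel_max_full_trunk_def maximal_full_trunk_def full_trunk_def by blast
    then show ?thesis
      using rel_max_full_trunk_eq_Union_maximum_chains[OF R] by simp
  qed
  show "\<exists>R::'a set. rel_max_full_trunk R" if "trunk (\<Union>{C::'a set. maximum_chain C})"
    using that assms rel_max_full_trunk_Union_maximum_chains by blast
qed

end
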